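(* Let $1\le p<2$, let $\{X_n,n\ge1\}$ be a sequence of identically distributed random variables satisfying the variance condition (V), and let $L$ be a slowly varying function on $[0,\infty)$ satisfying the standing assumptions (S), with $L(x)\ge1$ and $L$ increasing on $[0,\infty)$ when $p=1$. If for some constant $c\in\mathbb{R}$, $$\sum_{n=1}^{\infty} n^{-1}\,\mathbb{P}\left(\max_{1\le j\le n}\left|\sum_{i=1}^{j}(X_i-c)\right|>\varepsilon n^{1/p}\tilde{L}(n^{1/p})\right)<\infty\quad\text{for all }\varepsilon>0,$$ then $\mathbb{E}\left(|X_1|^pL^p(|X_1|)\right)<\infty$ and $\mathbb{E}(X_1)=c$.
   Context: A function $R$ is slowly varying if it is positive and measurable on $[A,\infty)$ for some $A>0$ and $\lim_{x\to\infty}R(\lambda x)/R(x)=1$ for each $\lambda>0$. The de Bruijn conjugate $\tilde L$ of a slowly varying $L$ is a slowly varying function with $\lim_{x\to\infty}L(x)\tilde L(xL(x))=1$ and $\lim_{x\to\infty}\tilde L(x)L(x\tilde L(x))=1$. Standing assumptions (S): $L$ and $\tilde L$ are continuous on $[0,\infty)$ and differentiable on $[A,\infty)$ for some $A>0$, and $\lim_{x\to\infty}xL'(x)/L(x)=0$. Variance condition (V): there is a constant $C$ such that for all integers $k\ge0$, $\ell\ge1$ and all nondecreasing functions $f_i:\mathbb{R}\to\mathbb{R}$, $\operatorname{Var}\left(\sum_{i=k+1}^{k+\ell}f_i(X_i)\right)\le C\sum_{i=k+1}^{k+\ell}\operatorname{Var}(f_i(X_i))$, provided the variances exist. *)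

theory Defs
  imports "HOL-Probability.Probability"
begin

definition slowly_varying :: "(real \<Rightarrow> real) \<Rightarrow> bool" where
  "slowly_varying R \<longleftrightarrow>
     (\<exists>A>0. (\<forall>x\<ge>A. R x > 0) \<and> R \<in> borel_measurable (restrict_space borel {A..})) \<and>
     (\<forall>lam>0. ((\<lambda>x. R (lam * x) / R x) \<longlongrightarrow> 1) at_top)"

definition de_bruijn_conjugate :: "(real \<Rightarrow> real) \<Rightarrow> (real \<Rightarrow> real) \<Rightarrow> bool" where
  "de_bruijn_conjugate L Lt \<longleftrightarrow>
     slowly_varying Lt \<and>
     ((\<lambda>x. L x * Lt (x * L x)) \<longlongrightarrow> 1) at_top \<and>
     ((\<lambda>x. Lt x * L (x * Lt x)) \<longlongrightarrow> 1) at_top"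

definition standing_assumptions :: "(real \<Rightarrow> real) \<Rightarrow> (real \<Rightarrow> real) \<Rightarrow> bool" where
  "standing_assumptions L Lt \<longleftrightarrow>
     continuous_on {0..} L \<and> continuous_on {0..} Lt \<and>
     (\<exists>A>0. \<forall>x\<ge>A. L differentiable (at x) \<and> Lt differentiable (at x)) \<and>
     ((\<lambda>x. x * deriv L x / L x) \<longlongrightarrow> 0) at_top"

text \<open>Variance condition (V) for the sequence X 1, X 2, ... (X 0 is ignored).\<close>
definition variance_condition :: "'a measure \<Rightarrow> (nat \<Rightarrow> 'a \<Rightarrow> real) \<Rightarrow> bool" where
  "variance_condition M X \<longleftrightarrow>
     (\<exists>C::real. \<forall>(k::nat) (l::nat) (f::nat \<Rightarrow> real \<Rightarrow> real).
        l \<ge> 1 \<longrightarrow> (\<forall>i. mono (f i)) \<longrightarrow>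
        (\<forall>i\<in>{k+1..k+l}. integrable M (\<lambda>\<omega>. (f i (X i \<omega>))\<^sup>2)) \<longrightarrow>
        prob_space.variance M (\<lambda>\<omega>. \<Sum>i\<in>{k+1..k+l}. f i (X i \<omega>))
          \<le> C * (\<Sum>i\<in>{k+1..k+l}. prob_space.variance M (\<lambda>\<omega>. f i (X i \<omega>))))"

end

theory Submission
  imports Defs
begin

text \<open>
  Put \<open>b n = n powr (1/p) * Lt (n powr (1/p))\<close>. De Bruijn conjugacy gives
  \<open>b n * L (b n) \<sim> n powr (1/p)\<close>, so \<open>b\<close> tends to infinity, is increasing up to a constant
  factor, and is \<open>O(n)\<close> (for \<open>p = 1\<close> this uses \<open>L \<ge> 1\<close>).

  A single summand with \<open>\<bar>X j - c\<bar> > 2 \<epsilon> b n\<close> forces the maximal partial sum above \<open>\<epsilon> b n\<close>.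
  With \<open>q n\<close> the probability that \<open>X 1 - c\<close> exceeds \<open>2 \<epsilon> b n\<close> on one given side, (V) bounds the
  variance of the number of such summands among the first \<open>n\<close> by \<open>C\<close> times its mean \<open>n q n\<close>,
  and the second moment method gives \<open>n q n / (C + n q n) \<le> P(max > \<epsilon> b n)\<close>.
  Summing against \<open>1/n\<close> and using the near monotonicity of \<open>b\<close> yields
  \<open>\<Sum>n. P(\<bar>X 1 - c\<bar> > b n) < \<infinity>\<close>, which is \<open>E (\<bar>X 1\<bar> L \<bar>X 1\<bar>) powr p < \<infinity>\<close> because
  \<open>\<bar>x\<bar> L \<bar>x\<bar> \<le> K n powr (1/p)\<close> whenever \<open>\<bar>x - c\<bar> \<le> b n\<close>. Hence \<open>X 1\<close> is integrable, and the weak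
  law of large numbers, which holds under (V) by truncation and Chebyshev's inequality, forces
  \<open>E (X 1) = c\<close> because \<open>b n = O(n)\<close>.
\<close>

section \<open>Slowly varying functions and the normalising sequence\<close>

lemma eventually_mono_powr_mult:
  fixes L Lt :: "real \<Rightarrow> real"
  assumes sv: "slowly_varying L" and sa: "standing_assumptions L Lt" and \<delta>: "\<delta> > 0"
  obtains A where "A > 0" "\<And>y. y \<ge> A \<Longrightarrow> L y > 0"
    "\<And>y y'. A \<le> y \<Longrightarrow> y \<le> y' \<Longrightarrow> y powr \<delta> * L y \<le> y' powr \<delta> * L y'"
proof -
  obtain A1 where A1: "A1 > 0" "\<And>x. x \<ge> A1 \<Longrightarrow> L x > 0"
    using sv unfolding slowly_varying_def by blast
  obtain A2 where A2: "\<And>x. x \<ge> A2 \<Longrightarrow> L differentiable (at x)"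
    using sa unfolding standing_assumptions_def by blast
  have "((\<lambda>x. x * deriv L x / L x) \<longlongrightarrow> 0) at_top"
    using sa unfolding standing_assumptions_def by blast
  then have "eventually (\<lambda>x. x * deriv L x / L x > - \<delta>) at_top"
    using order_tendstoD(1)[of _ 0 at_top "- \<delta>"] \<delta> by simp
  then obtain A3 where A3: "\<And>x. x \<ge> A3 \<Longrightarrow> x * deriv L x / L x > - \<delta>"
    unfolding eventually_at_top_linorder by blast
  define A where "A = max A1 (max A2 A3)"
  have "A > 0" unfolding A_def using A1 by simp
  have deriv: "((\<lambda>t. t powr \<delta> * L t) has_real_derivative
      (\<delta> * t powr (\<delta> - 1) * L t + t powr \<delta> * deriv L t)) (at t)" if "t \<ge> A" for t
  proof -
    have "t > 0" using that \<open>A > 0\<close> by simp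
    have "(L has_real_derivative deriv L t) (at t)"
      using A2[of t] that unfolding A_def by (simp add: DERIV_deriv_iff_real_differentiable)
    with has_real_derivative_powr[OF \<open>t > 0\<close>, of \<delta>] show ?thesis
      by (auto dest: DERIV_mult simp: mult.commute)
  qed
  have deriv_nonneg: "\<delta> * t powr (\<delta> - 1) * L t + t powr \<delta> * deriv L t \<ge> 0" if "t \<ge> A" for t
  proof -
    have "t > 0" "L t > 0" using that \<open>A > 0\<close> A1 unfolding A_def by auto
    moreover have "t * deriv L t / L t > - \<delta>" using A3 that unfolding A_def by simp
    ultimately have "\<delta> * L t + t * deriv L t > 0" by (simp add: field_simps)
    moreover have "t powr \<delta> = t * t powr (\<delta> - 1)" using \<open>t > 0\<close> by (simp add: powr_diff)
    ultimately show ?thesis using \<open>t > 0\<close>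
      by (smt (verit, best) mult.assoc mult.commute distrib_left powr_gt_zero zero_less_mult_iff)
  qed
  show ?thesis
  proof (rule that[OF \<open>A > 0\<close>])
    show "L y > 0" if "y \<ge> A" for y using A1 that unfolding A_def by simp
    show "y powr \<delta> * L y \<le> y' powr \<delta> * L y'" if "A \<le> y" "y \<le> y'" for y y'
      by (rule deriv_nonneg_imp_mono[OF deriv deriv_nonneg]) (use that in auto)
  qed
qed

corollary eventually_mono_mult:
  fixes L Lt :: "real \<Rightarrow> real"
  assumes "slowly_varying L" and "standing_assumptions L Lt"
  obtains A where "A > 0" "\<And>y. y \<ge> A \<Longrightarrow> L y > 0"
    "\<And>y y'. A \<le> y \<Longrightarrow> y \<le> y' \<Longrightarrow> y * L y \<le> y' * L y'"
proof -
  obtain A where A: "A > 0" "\<And>y. y \<ge> A \<Longrightarrow> L y > 0"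
    "\<And>y y'. A \<le> y \<Longrightarrow> y \<le> y' \<Longrightarrow> y powr 1 * L y \<le> y' powr 1 * L y'"
    using eventually_mono_powr_mult[OF assms zero_less_one] by blast
  show ?thesis
    by (rule that[OF A(1,2)]) (use A(1) A(3) in auto)
qed

lemma eventually_root_le_mult:
  fixes L Lt :: "real \<Rightarrow> real" and p :: real
  assumes sv: "slowly_varying L" and sa: "standing_assumptions L Lt" and "1 \<le> p"
    and p1: "p = 1 \<Longrightarrow> \<forall>x\<ge>0. L x \<ge> 1"
  obtains c0 A where "c0 > 0" "A > 0" "\<And>y. y \<ge> A \<Longrightarrow> L y > 0 \<and> c0 * y powr (1/p) \<le> y * L y"
proof (cases "p = 1")
  case True
  obtain A where A: "A > 0" "\<And>y. y \<ge> A \<Longrightarrow> L y > 0"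
    and "\<And>y y'. A \<le> y \<Longrightarrow> y \<le> y' \<Longrightarrow> y * L y \<le> y' * L y'"
    using eventually_mono_mult[OF sv sa] by blast
  have "L y > 0 \<and> 1 * y powr (1/p) \<le> y * L y" if "y \<ge> A" for y
  proof
    show "L y > 0" using A(2) that .
    have "L y \<ge> 1" using p1[OF True] that A(1) by simp
    then show "1 * y powr (1/p) \<le> y * L y"
      using that A(1) True by (simp add: mult_le_cancel_left1)
  qed
  then show ?thesis by (rule that[OF zero_less_one A(1)])
next
  case False
  define \<delta> where "\<delta> = 1 - 1/p"
  have "\<delta> > 0" unfolding \<delta>_def using False \<open>1 \<le> p\<close> by (simp add: field_simps)
  then obtain A where A: "A > 0" "\<And>y. y \<ge> A \<Longrightarrow> L y > 0"
    "\<And>y y'. A \<le> y \<Longrightarrow> y \<le> y' \<Longrightarrow> y powr \<delta> * L y \<le> y' powr \<delta> * L y'"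
    using eventually_mono_powr_mult[OF sv sa] by blast
  have "L y > 0 \<and> (A powr \<delta> * L A) * y powr (1/p) \<le> y * L y" if "y \<ge> A" for y
  proof
    show "L y > 0" using A(2)[OF that] .
    have "(A powr \<delta> * L A) * y powr (1/p) \<le> (y powr \<delta> * L y) * y powr (1/p)"
      using A(3)[OF order_refl that] by (rule mult_right_mono) simp
    also have "\<dots> = y powr (1/p + \<delta>) * L y" by (simp add: powr_add mult_ac)
    also have "\<dots> = y * L y" using that A(1) by (simp add: \<delta>_def)
    finally show "(A powr \<delta> * L A) * y powr (1/p) \<le> y * L y" .
  qed
  moreover have "A powr \<delta> * L A > 0" using A(1,2) by simp
  ultimately show ?thesis by (intro that[of "A powr \<delta> * L A" A] A(1))

qed

lemma filterlim_real_powr_inverse: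
  fixes p :: real assumes "p > 0"
  shows "filterlim (\<lambda>n::nat. real n powr (1/p)) at_top sequentially"
proof (subst filterlim_at_top, intro allI)
  fix Z :: real
  show "eventually (\<lambda>n. Z \<le> real n powr (1/p)) sequentially"
    unfolding eventually_sequentially
  proof (intro exI allI impI)
    fix n assume "nat \<lceil>(max Z 1) powr p\<rceil> \<le> n"
    then have "((max Z 1) powr p) powr (1/p) \<le> real n powr (1/p)"
      using assms by (intro powr_mono2) auto
    then show "Z \<le> real n powr (1/p)" using assms by (simp add: powr_powr)
  qed
qed

definition normaliser :: "real \<Rightarrow> (real \<Rightarrow> real) \<Rightarrow> nat \<Rightarrow> real" where
  "normaliser p Lt n = real n powr (1/p) * Lt (real n powr (1/p))"

lemma normaliser_asymp:
  fixes L Lt :: "real \<Rightarrow> real" and p :: real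
  assumes db: "de_bruijn_conjugate L Lt" and "p > 0"
  defines "b \<equiv> normaliser p Lt"
  shows "(\<lambda>n. b n * \<bar>L (b n)\<bar> / real n powr (1/p)) \<longlonglongrightarrow> 1"
    and "eventually (\<lambda>n. b n > 0) sequentially"
proof -
  obtain At where At: "\<And>x. x \<ge> At \<Longrightarrow> Lt x > 0"
    using db unfolding de_bruijn_conjugate_def slowly_varying_def by blast
  define F where "F u = (u * Lt u) * \<bar>L (u * Lt u)\<bar> / u" for u
  have "((\<lambda>x. Lt x * L (x * Lt x)) \<longlongrightarrow> 1) at_top"
    using db unfolding de_bruijn_conjugate_def by blast
  then have "((\<lambda>x. \<bar>Lt x * L (x * Lt x)\<bar>) \<longlongrightarrow> \<bar>1\<bar>) at_top"
    by (rule tendsto_rabs)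
  moreover have "eventually (\<lambda>u. \<bar>Lt u * L (u * Lt u)\<bar> = F u) at_top"
    unfolding eventually_at_top_linorder F_def
  proof (intro exI[of _ "max At 1"] allI impI)
    fix u assume "max At 1 \<le> u"
    then have "u > 0" "Lt u > 0" using At by auto
    then show "\<bar>Lt u * L (u * Lt u)\<bar> = u * Lt u * \<bar>L (u * Lt u)\<bar> / u"
      by (simp add: abs_mult)
  qed
  ultimately have "(F \<longlongrightarrow> 1) at_top"
    by (simp add: Lim_transform_eventually)
  from filterlim_compose[OF this filterlim_real_powr_inverse[OF \<open>p > 0\<close>]]
  show "(\<lambda>n. b n * \<bar>L (b n)\<bar> / real n powr (1/p)) \<longlonglongrightarrow> 1"
    unfolding F_def b_def normaliser_def by (simp add: mult.assoc)
  have "eventually (\<lambda>n. real n powr (1/p) \<ge> max At 1) sequentially"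
    using filterlim_real_powr_inverse[OF \<open>p > 0\<close>] unfolding filterlim_at_top by blast
  then show "eventually (\<lambda>n. b n > 0) sequentially"
  proof eventually_elim
    case (elim n)
    then have "real n powr (1/p) \<ge> 1" "Lt (real n powr (1/p)) > 0" using At by auto
    then show ?case unfolding b_def normaliser_def by (smt (verit) mult_pos_pos)
  qed
qed

lemma continuous_on_abs_bounded_atLeastAtMost:
  fixes L :: "real \<Rightarrow> real"
  assumes "continuous_on {0..} L"
  obtains B where "B > 0" "\<And>y. y \<in> {0..R} \<Longrightarrow> \<bar>L y\<bar> \<le> B"
proof -
  have "continuous_on {0..R} L" using assms by (rule continuous_on_subset) auto
  then have "bounded (L ` {0..R})"
    by (intro compact_imp_bounded compact_continuous_image) auto
  then show ?thesis unfolding bounded_pos using that by auto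
qed

lemma normaliser_filterlim_at_top:
  fixes L :: "real \<Rightarrow> real" and b :: "nat \<Rightarrow> real"
  assumes cont: "continuous_on {0..} L" and "p > 0"
    and R: "(\<lambda>n. b n * \<bar>L (b n)\<bar> / real n powr (1/p)) \<longlonglongrightarrow> 1"
    and pos: "eventually (\<lambda>n. b n > 0) sequentially"
  shows "filterlim b at_top sequentially"
proof (subst filterlim_at_top, intro allI)
  fix Z :: real
  obtain B where B: "B > 0" "\<And>y. y \<in> {0..max Z 0} \<Longrightarrow> \<bar>L y\<bar> \<le> B"
    using continuous_on_abs_bounded_atLeastAtMost[OF cont] by blast
  have "eventually (\<lambda>n. b n * \<bar>L (b n)\<bar> / real n powr (1/p) > 1/2) sequentially"
    by (rule order_tendstoD(1)[OF R]) simp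
  moreover have "eventually (\<lambda>n. real n powr (1/p) \<ge> 2 * max Z 0 * B + 1) sequentially"
    using filterlim_real_powr_inverse[OF \<open>p > 0\<close>] unfolding filterlim_at_top by blast
  ultimately show "eventually (\<lambda>n. Z \<le> b n) sequentially"
    using pos
  proof eventually_elim
    case (elim n)
    show ?case
    proof (rule ccontr)
      assume "\<not> Z \<le> b n"
      then have bn: "b n \<in> {0..max Z 0}" using elim by auto
      have "real n powr (1/p) > 0"
        using elim(2) B(1) by (smt (verit) mult_nonneg_nonneg)
      then have "real n powr (1/p) / 2 < b n * \<bar>L (b n)\<bar>"
        using elim(1) by (simp add: field_simps)
      also have "\<dots> \<le> max Z 0 * B"
        using B(2)[OF bn] bn by (intro mult_mono) auto
      finally show False using elim(2) B(1) by auto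
    qed
  qed
qed

lemma normaliser_quasi_mono:
  fixes L Lt :: "real \<Rightarrow> real" and b :: "nat \<Rightarrow> real"
  assumes sv: "slowly_varying L" and sa: "standing_assumptions L Lt" and "p > 0"
    and R: "(\<lambda>n. b n * \<bar>L (b n)\<bar> / real n powr (1/p)) \<longlonglongrightarrow> 1"
    and b_top: "filterlim b at_top sequentially"
  obtains K N where "K > 0" "\<And>m n. N \<le> m \<Longrightarrow> m \<le> n \<Longrightarrow> b m \<le> K * b n"
proof -
  obtain A where A: "A > 0" "\<And>y. y \<ge> A \<Longrightarrow> L y > 0"
    and mono: "\<And>y y'. A \<le> y \<Longrightarrow> y \<le> y' \<Longrightarrow> y * L y \<le> y' * L y'"
    using eventually_mono_mult[OF sv sa] by blast
  have "((\<lambda>x. L (16 * x) / L x) \<longlongrightarrow> 1) at_top"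
    using sv unfolding slowly_varying_def by auto
  from filterlim_compose[OF this b_top]
  have "eventually (\<lambda>n. L (16 * b n) / L (b n) > 1/2) sequentially"
    by (rule order_tendstoD(1)) simp
  moreover have "eventually (\<lambda>n. b n * \<bar>L (b n)\<bar> / real n powr (1/p) > 1/2) sequentially"
    by (rule order_tendstoD(1)[OF R]) simp
  moreover have "eventually (\<lambda>n. b n * \<bar>L (b n)\<bar> / real n powr (1/p) < 2) sequentially"
    by (rule order_tendstoD(2)[OF R]) simp
  moreover have "eventually (\<lambda>n. b n \<ge> A) sequentially"
    using b_top unfolding filterlim_at_top by blast
  moreover have "eventually (\<lambda>n. n \<ge> (1::nat)) sequentially" by simp
  ultimately have "eventually (\<lambda>n. L (16 * b n) / L (b n) > 1/2 \<and>
      b n * \<bar>L (b n)\<bar> / real n powr (1/p) \<in> {1/2<..<2} \<and> b n \<ge> A \<and> n \<ge> 1) sequentially"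
    by eventually_elim auto
  then obtain N where N: "\<And>n. n \<ge> N \<Longrightarrow> L (16 * b n) / L (b n) > 1/2 \<and>
      b n * \<bar>L (b n)\<bar> / real n powr (1/p) \<in> {1/2<..<2} \<and> b n \<ge> A \<and> n \<ge> 1"
    unfolding eventually_sequentially by blast
  (* 16 * (1/2), from L (16 y) > L y / 2, beats the factor 2 * 2 between the ratio bounds *)
  have "b m \<le> 16 * b n" if mn: "N \<le> m" "m \<le> n" for m n
  proof (rule ccontr)
    assume "\<not> b m \<le> 16 * b n"
    have Nn: "L (16 * b n) / L (b n) > 1/2" "b n * L (b n) / real n powr (1/p) > 1/2"
      "b n \<ge> A" "n \<ge> 1"
      using N[of n] mn A(2)[of "b n"] by auto
    have Nm: "b m * L (b m) / real m powr (1/p) < 2" "b m \<ge> A" "m \<ge> 1"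
      using N[of m] mn A(2)[of "b m"] by auto
    have "L (b n) > 0" "b n > 0" using A Nn(3) by auto
    have "16 * b n * (L (b n) / 2) < 16 * b n * L (16 * b n)"
      using Nn(1) \<open>L (b n) > 0\<close> \<open>b n > 0\<close> by (simp add: field_simps)
    also have "\<dots> \<le> b m * L (b m)"
      using \<open>\<not> b m \<le> 16 * b n\<close> \<open>b n > 0\<close> Nn(3) by (intro mono) auto
    also have "\<dots> < 2 * real m powr (1/p)"
      using Nm(1,3) by (simp add: field_simps)
    also have "\<dots> \<le> 2 * real n powr (1/p)"
      using mn \<open>p > 0\<close> by (simp add: powr_mono2)
    also have "\<dots> < 4 * (b n * L (b n))"
      using Nn(2,4) by (simp add: field_simps)
    finally show False using mult_pos_pos[OF \<open>b n > 0\<close> \<open>L (b n) > 0\<close>] by simp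
  qed
  then show ?thesis by (intro that[of 16]) auto
qed

lemma normaliser_le_linear:
  fixes L :: "real \<Rightarrow> real" and b :: "nat \<Rightarrow> real"
  assumes "c0 > 0" "A > 0" and lower: "\<And>y. y \<ge> A \<Longrightarrow> L y > 0 \<and> c0 * y powr (1/p) \<le> y * L y"
    and "p > 0"
    and R: "(\<lambda>n. b n * \<bar>L (b n)\<bar> / real n powr (1/p)) \<longlonglongrightarrow> 1"
    and b_top: "filterlim b at_top sequentially"
  shows "eventually (\<lambda>n. b n \<le> (2 / c0) powr p * real n) sequentially"
proof -
  have "eventually (\<lambda>n. b n * \<bar>L (b n)\<bar> / real n powr (1/p) < 2) sequentially"
    by (rule order_tendstoD(2)[OF R]) simp
  moreover have "eventually (\<lambda>n. b n \<ge> A) sequentially"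
    using b_top unfolding filterlim_at_top by blast
  moreover have "eventually (\<lambda>n. n \<ge> (1::nat)) sequentially" by simp
  ultimately show ?thesis
  proof eventually_elim
    case (elim n)
    then have "L (b n) > 0" and "c0 * b n powr (1/p) \<le> b n * L (b n)"
      using lower by auto
    moreover have "b n * L (b n) < 2 * real n powr (1/p)"
      using elim \<open>L (b n) > 0\<close> by (simp add: field_simps)
    ultimately have "b n powr (1/p) < (2 / c0) * real n powr (1/p)"
      using \<open>c0 > 0\<close> by (simp add: field_simps)
    then have "(b n powr (1/p)) powr p < ((2 / c0) * real n powr (1/p)) powr p"
      using \<open>p > 0\<close> by (intro powr_less_mono2) auto
    moreover have "((2 / c0) * real n powr (1/p)) powr p = (2 / c0) powr p * real n"
      using \<open>c0 > 0\<close> \<open>p > 0\<close> by (subst powr_mult) (auto simp: powr_powr)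
    moreover have "(b n powr (1/p)) powr p = b n"
      using elim(2) \<open>A > 0\<close> \<open>p > 0\<close> by (simp add: powr_powr)
    ultimately show ?case by simp
  qed
qed

lemma mult_L_le_within_normaliser:
  fixes L Lt :: "real \<Rightarrow> real" and b :: "nat \<Rightarrow> real" and c p :: real
  assumes sv: "slowly_varying L" and sa: "standing_assumptions L Lt"
    and R: "(\<lambda>n. b n * \<bar>L (b n)\<bar> / real n powr (1/p)) \<longlonglongrightarrow> 1"
    and b_top: "filterlim b at_top sequentially"
  obtains A N where "A > 0"
    "\<And>n x. n \<ge> N \<Longrightarrow> A \<le> \<bar>x\<bar> \<Longrightarrow> \<bar>x - c\<bar> \<le> b n \<Longrightarrow> \<bar>x\<bar> * \<bar>L \<bar>x\<bar>\<bar> \<le> 8 * real n powr (1/p)"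
proof -
  obtain A where A: "A > 0" "\<And>y. y \<ge> A \<Longrightarrow> L y > 0"
    and mono: "\<And>y y'. A \<le> y \<Longrightarrow> y \<le> y' \<Longrightarrow> y * L y \<le> y' * L y'"
    using eventually_mono_mult[OF sv sa] by blast
  have "((\<lambda>x. L (2 * x) / L x) \<longlongrightarrow> 1) at_top"
    using sv unfolding slowly_varying_def by auto
  from filterlim_compose[OF this b_top]
  have "eventually (\<lambda>n. L (2 * b n) / L (b n) < 2) sequentially"
    by (rule order_tendstoD(2)) simp
  moreover have "eventually (\<lambda>n. b n * \<bar>L (b n)\<bar> / real n powr (1/p) < 2) sequentially"
    by (rule order_tendstoD(2)[OF R]) simp
  moreover have "eventually (\<lambda>n. b n \<ge> max A \<bar>c\<bar>) sequentially"
    using b_top unfolding filterlim_at_top by blast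
  moreover have "eventually (\<lambda>n. n \<ge> (1::nat)) sequentially" by simp
  ultimately have "eventually (\<lambda>n. L (2 * b n) / L (b n) < 2 \<and>
      b n * \<bar>L (b n)\<bar> / real n powr (1/p) < 2 \<and> b n \<ge> max A \<bar>c\<bar> \<and> n \<ge> 1) sequentially"
    by eventually_elim blast
  then obtain N where N: "\<And>n. n \<ge> N \<Longrightarrow> L (2 * b n) / L (b n) < 2 \<and>
      b n * \<bar>L (b n)\<bar> / real n powr (1/p) < 2 \<and> b n \<ge> max A \<bar>c\<bar> \<and> n \<ge> 1"
    unfolding eventually_sequentially by blast
  have "\<bar>x\<bar> * \<bar>L \<bar>x\<bar>\<bar> \<le> 8 * real n powr (1/p)" if "n \<ge> N" "A \<le> \<bar>x\<bar>" "\<bar>x - c\<bar> \<le> b n" for n x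
  proof -
    have Nn: "L (2 * b n) / L (b n) < 2" "b n * \<bar>L (b n)\<bar> / real n powr (1/p) < 2"
      "b n \<ge> A" "b n \<ge> \<bar>c\<bar>" "real n \<ge> 1" using N[OF that(1)] by auto
    have "L (b n) > 0" "L \<bar>x\<bar> > 0" using A(2) Nn(3) that(2) by auto
    have "\<bar>x\<bar> * \<bar>L \<bar>x\<bar>\<bar> = \<bar>x\<bar> * L \<bar>x\<bar>" using \<open>L \<bar>x\<bar> > 0\<close> by simp
    also have "\<dots> \<le> 2 * b n * L (2 * b n)" using that(2,3) Nn(4) by (intro mono) auto
    also have "\<dots> \<le> 2 * b n * (2 * L (b n))"
      using Nn(1,3) \<open>L (b n) > 0\<close> A(1) by (intro mult_left_mono) (auto simp: field_simps)
    also have "\<dots> \<le> 8 * real n powr (1/p)"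
      using Nn(2,5) \<open>L (b n) > 0\<close> by (simp add: field_simps)
    finally show ?thesis .
  qed
  with A(1) show ?thesis by (rule that)
qed

lemma moment_bound_within_normaliser:
  fixes L Lt :: "real \<Rightarrow> real" and b :: "nat \<Rightarrow> real" and c p :: real
  assumes sv: "slowly_varying L" and sa: "standing_assumptions L Lt" and "p > 0"
    and cont: "continuous_on {0..} L"
    and R: "(\<lambda>n. b n * \<bar>L (b n)\<bar> / real n powr (1/p)) \<longlonglongrightarrow> 1"
    and b_top: "filterlim b at_top sequentially"
  obtains K N where "K > 0"
    "\<And>n x. n \<ge> N \<Longrightarrow> \<bar>x - c\<bar> \<le> b n \<Longrightarrow> (\<bar>x\<bar> * \<bar>L \<bar>x\<bar>\<bar>) powr p \<le> K * real n"
proof -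
  obtain A N where "A > 0" and large:
    "\<And>n x. n \<ge> N \<Longrightarrow> A \<le> \<bar>x\<bar> \<Longrightarrow> \<bar>x - c\<bar> \<le> b n \<Longrightarrow> \<bar>x\<bar> * \<bar>L \<bar>x\<bar>\<bar> \<le> 8 * real n powr (1/p)"
    using mult_L_le_within_normaliser[OF sv sa R b_top] by blast
  obtain B where B: "B > 0" "\<And>y. y \<in> {0..A} \<Longrightarrow> \<bar>L y\<bar> \<le> B"
    using continuous_on_abs_bounded_atLeastAtMost[OF cont] by blast
  define K0 where "K0 = max (A * B) 8"
  have "K0 > 0" unfolding K0_def by simp
  have "(\<bar>x\<bar> * \<bar>L \<bar>x\<bar>\<bar>) powr p \<le> K0 powr p * real n" if "n \<ge> max N 1" "\<bar>x - c\<bar> \<le> b n" for n x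
  proof -
    have "real n powr (1/p) \<ge> 1" using that(1) \<open>p > 0\<close> by (intro ge_one_powr_ge_zero) auto
    have "\<bar>x\<bar> * \<bar>L \<bar>x\<bar>\<bar> \<le> K0 * real n powr (1/p)"
    proof (cases "\<bar>x\<bar> \<le> A")
      case True
      then have "\<bar>x\<bar> * \<bar>L \<bar>x\<bar>\<bar> \<le> A * B" using B(2)[of "\<bar>x\<bar>"] by (intro mult_mono) auto
      also have "\<dots> \<le> K0" unfolding K0_def by simp
      also have "\<dots> \<le> K0 * real n powr (1/p)"
        using \<open>K0 > 0\<close> \<open>real n powr (1/p) \<ge> 1\<close> by (simp add: mult_le_cancel_left1)
      finally show ?thesis .
    next
      case False
      then have "\<bar>x\<bar> * \<bar>L \<bar>x\<bar>\<bar> \<le> 8 * real n powr (1/p)" using large that by auto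
      also have "\<dots> \<le> K0 * real n powr (1/p)" unfolding K0_def by (intro mult_right_mono) auto
      finally show ?thesis .
    qed
    then have "(\<bar>x\<bar> * \<bar>L \<bar>x\<bar>\<bar>) powr p \<le> (K0 * real n powr (1/p)) powr p"
      using \<open>p > 0\<close> by (intro powr_mono2) auto
    also have "\<dots> = K0 powr p * real n"
      using \<open>K0 > 0\<close> \<open>p > 0\<close> by (simp add: powr_mult powr_powr)
    finally show ?thesis .
  qed
  moreover have "K0 powr p > 0" using \<open>K0 > 0\<close> by simp
  ultimately show ?thesis using that by blast
qed

section \<open>Partial sums, series and tail probabilities\<close>

lemma Max_abs_partial_sums_gt:
  fixes x :: "nat \<Rightarrow> real"
  assumes "s \<ge> 0" and j: "j \<in> {1..n}" and big: "\<bar>x j - c\<bar> > 2 * s"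
  shows "(MAX k\<in>{1..n}. \<bar>\<Sum>i=1..k. (x i - c)\<bar>) > s"
proof -
  define S where "S k = (\<Sum>i=1..k. (x i - c))" for k
  have le_Max: "\<bar>S k\<bar> \<le> (MAX k\<in>{1..n}. \<bar>S k\<bar>)" if "k \<in> {1..n}" for k
    using that by (intro Max_ge) auto
  have "S j = S (j - 1) + (x j - c)"
    using j unfolding S_def by (cases j) auto
  then have "\<bar>S j\<bar> > s \<or> \<bar>S (j - 1)\<bar> > s" using big by linarith
  moreover have "\<bar>S (j - 1)\<bar> \<le> (MAX k\<in>{1..n}. \<bar>S k\<bar>)" if "\<bar>S (j - 1)\<bar> > s"
  proof -
    have "j - 1 \<noteq> 0" using that \<open>s \<ge> 0\<close> by (auto simp: S_def)
    then show ?thesis using j by (intro le_Max) auto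
  qed
  ultimately show ?thesis using le_Max[OF j] unfolding S_def by force
qed

lemma abs_sum_diff_le_Max_abs_partial_sums:
  fixes x :: "nat \<Rightarrow> real"
  assumes "n \<ge> 1"
  shows "\<bar>(\<Sum>i=1..n. x i) - real n * c\<bar> \<le> (MAX k\<in>{1..n}. \<bar>\<Sum>i=1..k. (x i - c)\<bar>)"
proof -
  have "\<bar>\<Sum>i=1..n. (x i - c)\<bar> \<le> (MAX k\<in>{1..n}. \<bar>\<Sum>i=1..k. (x i - c)\<bar>)"
    using assms by (intro Max_ge) auto
  then show ?thesis by (simp add: sum_subtractf)
qed

lemma summable_div_real_frequently_lt:
  fixes a :: "nat \<Rightarrow> real"
  assumes "summable (\<lambda>n. a n / real n)" and "\<And>n. a n \<ge> 0" and "\<delta> > 0"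
  shows "frequently (\<lambda>n. a n < \<delta>) sequentially"
  unfolding frequently_def
proof
  assume "eventually (\<lambda>n. \<not> a n < \<delta>) sequentially"
  then have "eventually (\<lambda>n. norm (inverse (real n)) \<le> a n / real n / \<delta>) sequentially"
  proof eventually_elim
    case (elim n)
    then show ?case using \<open>\<delta> > 0\<close> by (cases "n = 0") (auto simp: field_simps)
  qed
  then have "summable (\<lambda>n. inverse (real n))"
    by (rule summable_comparison_test_ev[OF _ summable_divide[OF assms(1)]])
  then show False using not_summable_harmonic by blast
qed

lemma divide_add_mult_mono:
  fixes x y C :: real
  assumes "C > 0" "0 \<le> x" "x \<le> y" "i \<le> n"
  shows "x / (C + real n * x) \<le> y / (C + real i * y)"
proof -
  have "x / (C + real n * x) \<le> x / (C + real i * x)"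
    using assms
    by (intro divide_left_mono add_left_mono mult_right_mono mult_pos_pos add_pos_nonneg) auto
  also have "\<dots> \<le> y / (C + real i * y)"
  proof -
    have "C + real i * x > 0" "C + real i * y > 0" using assms by (auto intro: add_pos_nonneg)
    moreover have "x * C \<le> y * C" using assms by (intro mult_right_mono) auto
    ultimately show ?thesis by (simp add: field_simps)
  qed
  finally show ?thesis .
qed

text \<open>The saturated terms \<open>x / (C + n x)\<close> of \<open>v\<close> dominate those of \<open>u\<close> on the block \<open>[n/2, n)\<close>,
  so the Cauchy criterion for \<open>v\<close> forces \<open>n u n < C\<close>, where saturation is harmless.\<close>

lemma summable_of_summable_saturated:
  fixes u v :: "nat \<Rightarrow> real"
  assumes "C > 0" and u_nonneg: "\<And>n. u n \<ge> 0"
    and su: "summable (\<lambda>n. u n / (C + real n * u n))"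
    and sv: "summable (\<lambda>n. v n / (C + real n * v n))"
    and le: "\<And>m n. N \<le> m \<Longrightarrow> m \<le> n \<Longrightarrow> u n \<le> v m"
  shows "summable u"
proof (rule summable_comparison_test_ev[OF _ summable_mult[OF su, of "2 * C"]])
  obtain M where M: "\<And>m k. m \<ge> M \<Longrightarrow> norm (\<Sum>i\<in>{m..<k}. v i / (C + real i * v i)) < 1/4"
    using sv unfolding summable_Cauchy by (meson zero_less_divide_1_iff zero_less_numeral)
  have "norm (u n) \<le> 2 * C * (u n / (C + real n * u n))" if n: "n \<ge> 2 * (N + M)" for n
  proof -
    define s where "s = u n / (C + real n * u n)"
    have "C + real n * u n > 0" using \<open>C > 0\<close> u_nonneg by (simp add: add_pos_nonneg)
    have "s \<ge> 0" unfolding s_def using \<open>C > 0\<close> u_nonneg by simp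
    have "(\<Sum>i\<in>{n div 2..<n}. s) \<le> (\<Sum>i\<in>{n div 2..<n}. v i / (C + real i * v i))"
      unfolding s_def using n u_nonneg \<open>C > 0\<close>
      by (intro sum_mono divide_add_mult_mono le) auto
    also have "\<dots> \<le> norm (\<Sum>i\<in>{n div 2..<n}. v i / (C + real i * v i))" by simp
    also have "\<dots> < 1/4" using n by (intro M) auto
    finally have "real (n - n div 2) * s < 1/4" by simp
    moreover have "real n * s \<le> 2 * real (n - n div 2) * s"
      using \<open>s \<ge> 0\<close> by (intro mult_right_mono) linarith+
    ultimately have "real n * s < 1/2" by linarith
    then have "real n * u n < C"
      using \<open>C + real n * u n > 0\<close> unfolding s_def by (simp add: field_simps)
    then have "u n / (2 * C) \<le> s"
      unfolding s_def
      by (intro divide_left_mono mult_pos_pos) (use u_nonneg \<open>C > 0\<close> \<open>C + real n * u n > 0\<close> in auto)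
    then show ?thesis using u_nonneg \<open>C > 0\<close> unfolding s_def by (simp add: field_simps)
  qed
  then show "eventually (\<lambda>n. norm (u n) \<le> 2 * C * (u n / (C + real n * u n))) sequentially"
    unfolding eventually_sequentially by blast
qed

lemma (in prob_space) integrable_of_summable_prob_gt:
  fixes W :: "'a \<Rightarrow> real"
  assumes [measurable]: "W \<in> borel_measurable M" and W_nonneg: "\<And>w. W w \<ge> 0" and "K > 0"
    and tail: "summable (\<lambda>n. prob {w\<in>space M. W w > K * real n})"
  shows "integrable M W"
proof -
  define V where "V w = W w / K" for w
  have [measurable]: "V \<in> borel_measurable M" unfolding V_def by measurable
  have events: "{w\<in>space M. V w > real n} = {w\<in>space M. W w > K * real n}" for n
    unfolding V_def using \<open>K > 0\<close> by (auto simp: field_simps)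
  have pointwise: "ennreal (V w) \<le> (\<Sum>n. indicator {w\<in>space M. V w > real n} w)"
    if "w \<in> space M" for w
  proof -
    define k where "k = nat \<lceil>V w\<rceil>"
    have "ennreal (V w) \<le> ennreal (real k)" unfolding k_def by (intro ennreal_leI) linarith
    also have "\<dots> = (\<Sum>n<k. indicator {w\<in>space M. V w > real n} w)"
    proof -
      have "indicator {w\<in>space M. V w > real n} w = (1::ennreal)" if "n < k" for n
      proof -
        have "int n < \<lceil>V w\<rceil>" using \<open>n < k\<close> unfolding k_def by linarith
        then have "real n < V w" by (simp add: less_ceiling_iff)
        with \<open>w \<in> space M\<close> show ?thesis by simp
      qed
      then have "(\<Sum>n<k. indicator {w\<in>space M. V w > real n} w) = (\<Sum>n<k. (1::ennreal))"
        by (intro sum.cong) auto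
      then show ?thesis by (simp add: ennreal_of_nat_eq_real_of_nat)
    qed
    also have "\<dots> \<le> (\<Sum>n. indicator {w\<in>space M. V w > real n} w)"
      by (rule sum_le_suminf) auto
    finally show ?thesis .
  qed
  have "(\<integral>\<^sup>+w. ennreal (V w) \<partial>M) \<le> (\<integral>\<^sup>+w. (\<Sum>n. indicator {w\<in>space M. V w > real n} w) \<partial>M)"
    by (rule nn_integral_mono) (use pointwise in auto)
  also have "\<dots> = (\<Sum>n. ennreal (prob {w\<in>space M. W w > K * real n}))"
    by (subst nn_integral_suminf) (auto simp: events emeasure_eq_measure)
  also have "\<dots> < \<infinity>"
    using tail by (simp add: suminf_ennreal2)
  finally have "integrable M V"
    using W_nonneg \<open>K > 0\<close> by (intro integrableI_bounded) (auto simp: V_def)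
  then have "integrable M (\<lambda>w. K * V w)" by simp
  then show ?thesis unfolding V_def using \<open>K > 0\<close> by simp
qed

lemma (in prob_space) integrable_of_summable_prob_deviation:
  fixes Y :: "'a \<Rightarrow> real" and g :: "real \<Rightarrow> real" and b :: "nat \<Rightarrow> real"
  assumes [measurable]: "Y \<in> borel_measurable M" "g \<in> borel_measurable borel"
    and "\<And>x. g x \<ge> 0" and "K > 0"
    and bound: "\<And>n x. n \<ge> N \<Longrightarrow> \<bar>x - c\<bar> \<le> b n \<Longrightarrow> g x \<le> K * real n"
    and tail: "summable (\<lambda>n. prob {w\<in>space M. \<bar>Y w - c\<bar> > b n})"
  shows "integrable M (\<lambda>w. g (Y w))"
proof (rule integrable_of_summable_prob_gt[OF _ _ \<open>K > 0\<close>])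
  have "prob {w\<in>space M. g (Y w) > K * real n} \<le> prob {w\<in>space M. \<bar>Y w - c\<bar> > b n}"
    if n: "n \<ge> N" for n
  proof (rule finite_measure_mono)
    show "{w\<in>space M. g (Y w) > K * real n} \<subseteq> {w\<in>space M. \<bar>Y w - c\<bar> > b n}"
    proof (rule Collect_mono, rule impI)
      fix w assume "w \<in> space M \<and> K * real n < g (Y w)"
      then show "w \<in> space M \<and> b n < \<bar>Y w - c\<bar>" using bound[OF n, of "Y w"] by linarith
    qed
  qed measurable
  then have "eventually (\<lambda>n. norm (prob {w\<in>space M. g (Y w) > K * real n})
      \<le> prob {w\<in>space M. \<bar>Y w - c\<bar> > b n}) sequentially"
    unfolding eventually_sequentially by auto
  then show "summable (\<lambda>n. prob {w\<in>space M. g (Y w) > K * real n})"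
    by (rule summable_comparison_test_ev[OF _ tail])
qed (use assms in auto)

lemma (in prob_space) integrable_of_integrable_moment:
  fixes Y :: "'a \<Rightarrow> real" and L :: "real \<Rightarrow> real"
  assumes [measurable]: "Y \<in> borel_measurable M"
    and moment: "integrable M (\<lambda>w. (\<bar>Y w\<bar> * \<bar>L \<bar>Y w\<bar>\<bar>) powr p)"
    and "p > 0" "c0 > 0" "A > 0"
    and lower: "\<And>y. y \<ge> A \<Longrightarrow> L y > 0 \<and> c0 * y powr (1/p) \<le> y * L y"
  shows "integrable M Y"
proof (rule Bochner_Integration.integrable_bound)
  show "integrable M (\<lambda>w. A + (\<bar>Y w\<bar> * \<bar>L \<bar>Y w\<bar>\<bar>) powr p / c0 powr p)"
    using moment by simp
  have "\<bar>y\<bar> \<le> A + (\<bar>y\<bar> * \<bar>L \<bar>y\<bar>\<bar>) powr p / c0 powr p" for y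
  proof (cases "\<bar>y\<bar> \<ge> A")
    case True
    then have "L \<bar>y\<bar> > 0" and "c0 * \<bar>y\<bar> powr (1/p) \<le> \<bar>y\<bar> * L \<bar>y\<bar>" using lower by auto
    then have "(c0 * \<bar>y\<bar> powr (1/p)) powr p \<le> (\<bar>y\<bar> * \<bar>L \<bar>y\<bar>\<bar>) powr p"
      using \<open>c0 > 0\<close> \<open>p > 0\<close> by (intro powr_mono2) auto
    moreover have "(c0 * \<bar>y\<bar> powr (1/p)) powr p = c0 powr p * \<bar>y\<bar>"
      using \<open>c0 > 0\<close> \<open>p > 0\<close> by (simp add: powr_mult powr_powr)
    ultimately have "\<bar>y\<bar> \<le> (\<bar>y\<bar> * \<bar>L \<bar>y\<bar>\<bar>) powr p / c0 powr p"
      using \<open>c0 > 0\<close> by (simp add: pos_le_divide_eq mult.commute)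
    then show ?thesis using \<open>A > 0\<close> by simp
  qed (simp add: add_increasing2)
  then show "AE w in M. norm (Y w) \<le> norm (A + (\<bar>Y w\<bar> * \<bar>L \<bar>Y w\<bar>\<bar>) powr p / c0 powr p)"
    by (intro AE_I2) (smt (verit) real_norm_def)
qed measurable

section \<open>Truncation\<close>

definition truncation :: "nat \<Rightarrow> real \<Rightarrow> real" where
  "truncation k x = max (- real k) (min (real k) x)"

lemma abs_truncation_le_level: "\<bar>truncation k x\<bar> \<le> real k"
  unfolding truncation_def by auto

lemma abs_truncation_le: "\<bar>truncation k x\<bar> \<le> \<bar>x\<bar>"
  unfolding truncation_def by auto

lemma abs_diff_truncation_le: "\<bar>x - truncation k x\<bar> \<le> \<bar>x\<bar>"
  unfolding truncation_def by auto

lemma mono_truncation: "mono (truncation k)"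
  unfolding truncation_def mono_def by auto

lemma borel_measurable_truncation [measurable]: "truncation k \<in> borel_measurable borel"
  by (rule borel_measurable_mono[OF mono_truncation])

lemma eventually_truncation_eq: "eventually (\<lambda>k. truncation k x = x) sequentially"
  unfolding eventually_sequentially truncation_def
  by (intro exI[of _ "nat \<lceil>\<bar>x\<bar>\<rceil>"]) (auto simp: ceiling_le_iff)

lemma truncation_square_le: "(truncation k x)\<^sup>2 \<le> real k * \<bar>x\<bar>"
proof -
  have "\<bar>truncation k x\<bar> * \<bar>truncation k x\<bar> \<le> real k * \<bar>x\<bar>"
    by (rule mult_mono[OF abs_truncation_le_level abs_truncation_le]) simp_all
  then show ?thesis by (simp add: power2_eq_square abs_mult_self_eq)
qed

lemma (in finite_measure) integrable_truncation:
  assumes [measurable]: "Y \<in> borel_measurable M"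
  shows "integrable M (\<lambda>w. truncation n (Y w))" and "integrable M (\<lambda>w. (truncation n (Y w))\<^sup>2)"
proof -
  show "integrable M (\<lambda>w. truncation n (Y w))"
    by (rule integrable_const_bound[where B="real n"]) (auto simp: abs_truncation_le_level)
  show "integrable M (\<lambda>w. (truncation n (Y w))\<^sup>2)"
    by (rule integrable_const_bound[where B="real n ^ 2"])
      (auto simp: abs_truncation_le_level abs_le_square_iff[symmetric])
qed

lemma truncation_error_tendsto_zero:

  fixes Y :: "'a \<Rightarrow> real"
  assumes "integrable M Y"
  shows "(\<lambda>k. \<integral>w. \<bar>Y w - truncation k (Y w)\<bar> \<partial>M) \<longlonglongrightarrow> 0"
proof -
  have "(\<lambda>k. \<integral>w. \<bar>Y w - truncation k (Y w)\<bar> \<partial>M) \<longlonglongrightarrow> (\<integral>w. 0 \<partial>M)"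
  proof (rule integral_dominated_convergence[where w="\<lambda>w. \<bar>Y w\<bar>"])
    show "AE w in M. (\<lambda>k. \<bar>Y w - truncation k (Y w)\<bar>) \<longlonglongrightarrow> 0"
    proof (intro AE_I2 tendsto_eventually)
      fix w
      show "eventually (\<lambda>k. \<bar>Y w - truncation k (Y w)\<bar> = 0) sequentially"
        using eventually_truncation_eq[of "Y w"] by eventually_elim simp
    qed
  qed (use assms abs_diff_truncation_le in auto)
  then show ?thesis by simp
qed

lemma truncated_second_moment_tendsto_zero:
  fixes Y :: "'a \<Rightarrow> real"
  assumes "integrable M Y"
  shows "(\<lambda>k. \<integral>w. (truncation k (Y w))\<^sup>2 / real k \<partial>M) \<longlonglongrightarrow> 0"
proof -
  have "(\<lambda>k. \<integral>w. (truncation k (Y w))\<^sup>2 / real k \<partial>M) \<longlonglongrightarrow> (\<integral>w. 0 \<partial>M)"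
  proof (rule integral_dominated_convergence[where w="\<lambda>w. \<bar>Y w\<bar>"])
    show "AE w in M. (\<lambda>k. (truncation k (Y w))\<^sup>2 / real k) \<longlonglongrightarrow> 0"
    proof (rule AE_I2)
      fix w
      have "eventually (\<lambda>k. (Y w)\<^sup>2 / real k = (truncation k (Y w))\<^sup>2 / real k) sequentially"
        using eventually_truncation_eq[of "Y w"] by eventually_elim simp
      then show "(\<lambda>k. (truncation k (Y w))\<^sup>2 / real k) \<longlonglongrightarrow> 0"
        by (rule Lim_transform_eventually[OF lim_const_over_n])
    qed
    show "AE w in M. norm ((truncation k (Y w))\<^sup>2 / real k) \<le> \<bar>Y w\<bar>" for k
      using truncation_square_le[of k "Y w" for w]
      by (intro AE_I2) (cases "k = 0"; simp add: field_simps)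
  qed (use assms in auto)
  then show ?thesis by simp
qed

section \<open>Identically distributed sequences under the variance condition\<close>

lemma (in prob_space) variance_uminus:
  fixes Y :: "'a \<Rightarrow> real"
  shows "variance (\<lambda>w. - Y w) = variance Y"
  by (simp add: power2_commute)

lemma (in prob_space) prob_ge_of_second_moment:
  fixes N :: "'a \<Rightarrow> real"
  assumes [measurable]: "N \<in> borel_measurable M" "A \<in> events"
    and "integrable M N" "integrable M (\<lambda>w. (N w)\<^sup>2)"
    and vanish: "\<And>w. w \<in> space M \<Longrightarrow> w \<notin> A \<Longrightarrow> N w = 0"
    and "C > 0" "m \<ge> 0" and mean: "expectation N = m"
    and second_moment: "expectation (\<lambda>w. (N w)\<^sup>2) \<le> C * m + m\<^sup>2"
  shows "m / (C + m) \<le> prob A"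
proof -
  define a where "a = C + m"
  have "a > 0" unfolding a_def using \<open>C > 0\<close> \<open>m \<ge> 0\<close> by simp
  have int_A: "integrable M (\<lambda>w. indicator A w :: real)"
    by (rule integrable_const_bound[where B=1]) (auto simp: indicator_def)
  have "2 * a * N w \<le> a\<^sup>2 * indicator A w + (N w)\<^sup>2" if "w \<in> space M" for w
  proof (cases "w \<in> A")
    case True
    have "0 \<le> (a - N w)\<^sup>2" by simp
    with True show ?thesis by (simp add: power2_diff)
  qed (use vanish that in simp)
  then have "expectation (\<lambda>w. 2 * a * N w) \<le> expectation (\<lambda>w. a\<^sup>2 * indicator A w + (N w)\<^sup>2)"
    using assms int_A by (intro integral_mono) (auto intro!: Bochner_Integration.integrable_add)
  then have "2 * a * m \<le> a\<^sup>2 * prob A + expectation (\<lambda>w. (N w)\<^sup>2)"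
    using assms int_A by (simp add: mean Int_absorb2 sets.sets_into_space)
  then have "a * m \<le> a * (a * prob A)"
    using second_moment unfolding a_def by (simp add: power2_eq_square algebra_simps)
  then have "m \<le> a * prob A" using \<open>a > 0\<close> by simp
  then show ?thesis using \<open>a > 0\<close> unfolding a_def by (simp add: pos_divide_le_eq mult.commute)
qed

lemma (in prob_space) exists_outside_events:
  assumes "A \<in> events" and "B \<in> events" and "prob A + prob B < 1"
  obtains w where "w \<in> space M" "w \<notin> A" "w \<notin> B"
proof -
  have "prob (A \<union> B) < prob (space M)"
    using measure_Un_le[OF assms(1,2)] assms(3) by (simp add: prob_space)
  then have "\<not> space M \<subseteq> A \<union> B"
    using finite_measure_mono[of "space M" "A \<union> B"] assms(1,2) by auto
  then show ?thesis using that by blast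

qed

locale id_real_sequence = prob_space M for M :: "'a measure" +
  fixes X :: "nat \<Rightarrow> 'a \<Rightarrow> real"
  assumes measurable_X [measurable]: "\<And>i. X i \<in> borel_measurable M"
    and distr_X: "\<And>i. i \<ge> 1 \<Longrightarrow> distr M borel (X i) = distr M borel (X 1)"
begin

lemma integrable_comp_X_iff:
  fixes g :: "real \<Rightarrow> real"
  assumes [measurable]: "g \<in> borel_measurable borel" and "i \<ge> 1"
  shows "integrable M (\<lambda>w. g (X i w)) \<longleftrightarrow> integrable M (\<lambda>w. g (X 1 w))"
  using integrable_distr_eq[of "X i" M borel g] integrable_distr_eq[of "X 1" M borel g]
    distr_X[OF \<open>i \<ge> 1\<close>] by simp

lemma expectation_comp_X:
  fixes g :: "real \<Rightarrow> real"
  assumes [measurable]: "g \<in> borel_measurable borel" and "i \<ge> 1"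
  shows "expectation (\<lambda>w. g (X i w)) = expectation (\<lambda>w. g (X 1 w))"
  using integral_distr[of "X i" M borel g] integral_distr[of "X 1" M borel g]
    distr_X[OF \<open>i \<ge> 1\<close>] by simp

lemma expectation_indicator_X:
  assumes [measurable]: "T \<in> sets borel" and "i \<ge> 1"
  shows "expectation (\<lambda>w. indicator T (X i w) :: real) = prob {w\<in>space M. X 1 w \<in> T}"
proof -
  have "expectation (\<lambda>w. indicator T (X i w) :: real) = expectation (\<lambda>w. indicator T (X 1 w) :: real)"
    using \<open>i \<ge> 1\<close> by (intro expectation_comp_X) auto
  also have "\<dots> = expectation (indicator {w\<in>space M. X 1 w \<in> T})"
    by (intro Bochner_Integration.integral_cong) (auto simp: indicator_def)
  finally show ?thesis by (simp add: Int_absorb2 subsetI)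
qed

lemma integrable_X:
  assumes "integrable M (X 1)" and "i \<ge> 1"
  shows "integrable M (X i)"
  using integrable_comp_X_iff[of "\<lambda>x. x" i] assms by simp

lemma expectation_truncation_sums:
  assumes "integrable M (X 1)"
  shows "expectation (\<lambda>w. \<Sum>i=1..n. \<bar>X i w - truncation n (X i w)\<bar>)
      = real n * expectation (\<lambda>w. \<bar>X 1 w - truncation n (X 1 w)\<bar>)"
    and "\<bar>expectation (\<lambda>w. \<Sum>i=1..n. truncation n (X i w)) - real n * expectation (X 1)\<bar>
      \<le> real n * expectation (\<lambda>w. \<bar>X 1 w - truncation n (X 1 w)\<bar>)"
proof -
  note int_X = integrable_X[OF assms] and int_trunc = integrable_truncation(1)[OF measurable_X]
  have "expectation (\<lambda>w. \<Sum>i=1..n. \<bar>X i w - truncation n (X i w)\<bar>)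
      = (\<Sum>i=1..n. expectation (\<lambda>w. \<bar>X i w - truncation n (X i w)\<bar>))"
    using int_X int_trunc by (intro Bochner_Integration.integral_sum) auto
  also have "\<dots> = (\<Sum>i=1..n. expectation (\<lambda>w. \<bar>X 1 w - truncation n (X 1 w)\<bar>))"
    by (intro sum.cong refl expectation_comp_X) auto
  finally show "expectation (\<lambda>w. \<Sum>i=1..n. \<bar>X i w - truncation n (X i w)\<bar>)
      = real n * expectation (\<lambda>w. \<bar>X 1 w - truncation n (X 1 w)\<bar>)" by simp
  have "expectation (\<lambda>w. \<Sum>i=1..n. truncation n (X i w))
      = (\<Sum>i=1..n. expectation (\<lambda>w. truncation n (X i w)))"
    using int_trunc by (intro Bochner_Integration.integral_sum) auto
  also have "\<dots> = (\<Sum>i=1..n. expectation (\<lambda>w. truncation n (X 1 w)))"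
    by (intro sum.cong refl expectation_comp_X) auto
  finally have "expectation (\<lambda>w. \<Sum>i=1..n. truncation n (X i w)) - real n * expectation (X 1)
      = real n * expectation (\<lambda>w. truncation n (X 1 w) - X 1 w)"
    using int_trunc assms by (simp add: algebra_simps)
  also have "\<bar>\<dots>\<bar> \<le> real n * expectation (\<lambda>w. \<bar>X 1 w - truncation n (X 1 w)\<bar>)"
    using integral_abs_bound[of M "\<lambda>w. truncation n (X 1 w) - X 1 w"]
    by (simp add: abs_mult abs_minus_commute mult_left_mono)
  finally show "\<bar>expectation (\<lambda>w. \<Sum>i=1..n. truncation n (X i w)) - real n * expectation (X 1)\<bar>
      \<le> real n * expectation (\<lambda>w. \<bar>X 1 w - truncation n (X 1 w)\<bar>)" .
qed

end

locale variance_controlled = id_real_sequence +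
  fixes C :: real
  assumes C_pos: "C > 0"
    and variance_sum_le: "\<And>n f. n \<ge> 1 \<Longrightarrow> (\<forall>i. mono (f i)) \<Longrightarrow>
      (\<forall>i\<in>{1..n}. integrable M (\<lambda>w. (f i (X i w))\<^sup>2)) \<Longrightarrow>
      variance (\<lambda>w. \<Sum>i\<in>{1..n}. f i (X i w)) \<le> C * (\<Sum>i\<in>{1..n}. variance (\<lambda>w. f i (X i w)))"
begin

lemma variance_count_le:
  assumes [measurable]: "T \<in> sets borel" and "n \<ge> 1"
    and sign: "mono (\<lambda>x. indicator T x :: real) \<or> antimono (\<lambda>x. indicator T x :: real)"
  shows "variance (\<lambda>w. \<Sum>j\<in>{1..n}. indicator T (X j w) :: real)
    \<le> C * (real n * prob {w\<in>space M. X 1 w \<in> T})"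
proof -
  define q where "q = prob {w\<in>space M. X 1 w \<in> T}"
  have int: "integrable M (\<lambda>w. indicator T (X j w) :: real)" for j
    by (rule integrable_const_bound[where B=1]) (auto simp: indicator_def)
  have square: "(indicator T x :: real)\<^sup>2 = indicator T x" for x
    by (simp add: indicator_def)
  have "variance (\<lambda>w. indicator T (X j w) :: real) \<le> q" if "j \<in> {1..n}" for j
  proof -
    have "expectation (\<lambda>w. indicator T (X j w) :: real) = q"
      unfolding q_def using that by (intro expectation_indicator_X) auto
    then show ?thesis
      using variance_eq[of "\<lambda>w. indicator T (X j w) :: real"] int[of j] by (simp add: square)
  qed
  then have sum_le: "C * (\<Sum>j\<in>{1..n}. variance (\<lambda>w. indicator T (X j w) :: real)) \<le> C * (real n * q)"
    using C_pos sum_mono[of "{1..n}" _ "\<lambda>_. q"] by (intro mult_left_mono) auto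
  from sign show ?thesis
  proof
    assume "mono (\<lambda>x. indicator T x :: real)"
    then show ?thesis
      using variance_sum_le[OF \<open>n \<ge> 1\<close>, of "\<lambda>_. indicator T"] int sum_le
      by (simp add: square q_def)
  next
    assume "antimono (\<lambda>x. indicator T x :: real)"
    then have "mono (\<lambda>x. - indicator T x :: real)"
      by (simp add: mono_def antimono_def)
    then have "\<forall>i. mono (\<lambda>x. - indicator T x :: real)" by simp
    moreover have "\<forall>i\<in>{1..n}. integrable M (\<lambda>w. (- indicator T (X i w) :: real)\<^sup>2)"
      using int by (simp add: square)
    ultimately have "variance (\<lambda>w. \<Sum>j\<in>{1..n}. - indicator T (X j w) :: real)
        \<le> C * (\<Sum>j\<in>{1..n}. variance (\<lambda>w. - indicator T (X j w) :: real))"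
      by (rule variance_sum_le[OF \<open>n \<ge> 1\<close>])
    then have "variance (\<lambda>w. \<Sum>j\<in>{1..n}. indicator T (X j w) :: real)
        \<le> C * (\<Sum>j\<in>{1..n}. variance (\<lambda>w. indicator T (X j w) :: real))"
      by (simp only: sum_negf variance_uminus)
    with sum_le show ?thesis by (simp add: q_def)
  qed
qed

lemma prob_exists_hit_ge:
  assumes [measurable]: "T \<in> sets borel" and "n \<ge> 1"
    and sign: "mono (\<lambda>x. indicator T x :: real) \<or> antimono (\<lambda>x. indicator T x :: real)"
  shows "real n * prob {w\<in>space M. X 1 w \<in> T} / (C + real n * prob {w\<in>space M. X 1 w \<in> T})
    \<le> prob {w\<in>space M. \<exists>j\<in>{1..n}. X j w \<in> T}"
proof (rule prob_ge_of_second_moment[OF _ _ _ _ _ C_pos])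
  define N where "N = (\<lambda>w. \<Sum>j\<in>{1..n}. indicator T (X j w) :: real)"
  have N_bounds: "0 \<le> N w" "N w \<le> real n" for w
    unfolding N_def using sum_mono[of "{1..n}" "\<lambda>j. indicator T (X j w) :: real" "\<lambda>_. 1"]
    by (auto intro: sum_nonneg simp: indicator_def)
  have [measurable]: "N \<in> borel_measurable M" unfolding N_def by measurable
  have "integrable M N"
    by (rule integrable_const_bound[where B="real n"]) (use N_bounds in auto)
  moreover have "integrable M (\<lambda>w. (N w)\<^sup>2)"
    by (rule integrable_const_bound[where B="real n ^ 2"]) (use N_bounds in \<open>auto intro: power_mono\<close>)
  ultimately have int: "integrable M N" "integrable M (\<lambda>w. (N w)\<^sup>2)" .
  have "expectation N = (\<Sum>j\<in>{1..n}. expectation (\<lambda>w. indicator T (X j w) :: real))"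
    unfolding N_def by (intro Bochner_Integration.integral_sum)
      (auto intro!: integrable_const_bound[where B=1] simp: indicator_def)
  also have "\<dots> = (\<Sum>j\<in>{1..n}. prob {w\<in>space M. X 1 w \<in> T})"
    by (intro sum.cong refl expectation_indicator_X) auto
  finally have mean: "expectation N = real n * prob {w\<in>space M. X 1 w \<in> T}" by simp
  show "N \<in> borel_measurable M" "integrable M N" "integrable M (\<lambda>w. (N w)\<^sup>2)"
    "expectation N = real n * prob {w\<in>space M. X 1 w \<in> T}" by fact+
  have "variance N \<le> C * (real n * prob {w\<in>space M. X 1 w \<in> T})"
    unfolding N_def by (rule variance_count_le[OF assms])
  then show "expectation (\<lambda>w. (N w)\<^sup>2) \<le> C * (real n * prob {w\<in>space M. X 1 w \<in> T})
      + (real n * prob {w\<in>space M. X 1 w \<in> T})\<^sup>2"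
    using variance_eq[OF int] mean by simp
  show "N w = 0" if "w \<notin> {w\<in>space M. \<exists>j\<in>{1..n}. X j w \<in> T}" "w \<in> space M" for w
    using that by (auto simp: N_def)
qed (auto simp: measure_nonneg)

end

context variance_controlled
begin

lemma variance_truncated_sum_le:
  assumes "n \<ge> 1"
  shows "variance (\<lambda>w. \<Sum>i=1..n. truncation n (X i w))
    \<le> C * (real n * expectation (\<lambda>w. (truncation n (X 1 w))\<^sup>2))"
proof -
  note int = integrable_truncation[OF measurable_X]
  have "variance (\<lambda>w. truncation n (X i w)) \<le> expectation (\<lambda>w. (truncation n (X 1 w))\<^sup>2)"
    if "i \<in> {1..n}" for i
    using variance_eq[OF int] expectation_comp_X[of "\<lambda>x. (truncation n x)\<^sup>2" i] that by simp
  then have "C * (\<Sum>i\<in>{1..n}. variance (\<lambda>w. truncation n (X i w)))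
      \<le> C * (real n * expectation (\<lambda>w. (truncation n (X 1 w))\<^sup>2))"
    using C_pos sum_mono[of "{1..n}" _ "\<lambda>_. expectation (\<lambda>w. (truncation n (X 1 w))\<^sup>2)"]
    by (intro mult_left_mono) auto
  with variance_sum_le[OF assms, of "\<lambda>_. truncation n"] int show ?thesis
    by (simp add: mono_truncation)
qed

lemma prob_truncated_sum_deviation_ge:
  assumes "n \<ge> 1" and "\<epsilon> > 0"
  defines "T \<equiv> \<lambda>w. \<Sum>i=1..n. truncation n (X i w)"
  shows "prob {w\<in>space M. \<bar>T w - expectation T\<bar> \<ge> \<epsilon> * real n}
    \<le> C * expectation (\<lambda>w. (truncation n (X 1 w))\<^sup>2 / real n) / \<epsilon>\<^sup>2"
proof -
  have T_measurable [measurable]: "T \<in> borel_measurable M" unfolding T_def by measurable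
  have bound: "\<bar>T w\<bar> \<le> real n * real n" for w
  proof -
    have "\<bar>T w\<bar> \<le> (\<Sum>i=1..n. \<bar>truncation n (X i w)\<bar>)" unfolding T_def by (rule sum_abs)
    also have "\<dots> \<le> (\<Sum>i=1..n. real n)" by (intro sum_mono abs_truncation_le_level)
    finally show ?thesis by simp
  qed
  have "integrable M (\<lambda>w. (T w)\<^sup>2)"
  proof (rule integrable_const_bound[where B="(real n * real n)\<^sup>2"])
    show "AE w in M. norm ((T w)\<^sup>2) \<le> (real n * real n)\<^sup>2"
      using bound by (intro AE_I2) (simp add: abs_le_square_iff[symmetric])
  qed simp
  then have "prob {w\<in>space M. \<bar>T w - expectation T\<bar> \<ge> \<epsilon> * real n} \<le> variance T / (\<epsilon> * real n)\<^sup>2"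
    using T_measurable \<open>n \<ge> 1\<close> \<open>\<epsilon> > 0\<close> by (intro Chebyshev_inequality) simp_all
  also have "\<dots> \<le> C * (real n * expectation (\<lambda>w. (truncation n (X 1 w))\<^sup>2)) / (\<epsilon> * real n)\<^sup>2"
    unfolding T_def by (intro divide_right_mono variance_truncated_sum_le[OF \<open>n \<ge> 1\<close>]) simp
  finally show ?thesis
    using \<open>n \<ge> 1\<close> by (simp add: power2_eq_square field_simps)
qed

lemma prob_truncation_error_sum_ge:
  assumes int: "integrable M (X 1)" and "n \<ge> 1" and "\<epsilon> > 0"
  shows "prob {w\<in>space M. (\<Sum>i=1..n. \<bar>X i w - truncation n (X i w)\<bar>) \<ge> \<epsilon> * real n}
    \<le> expectation (\<lambda>w. \<bar>X 1 w - truncation n (X 1 w)\<bar>) / \<epsilon>"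
proof -
  have "integrable M (\<lambda>w. \<Sum>i=1..n. \<bar>X i w - truncation n (X i w)\<bar>)"
    using integrable_X[OF int] integrable_truncation(1)[OF measurable_X]
    by (auto intro!: Bochner_Integration.integrable_sum)
  then have "prob {w\<in>space M. (\<Sum>i=1..n. \<bar>X i w - truncation n (X i w)\<bar>) \<ge> \<epsilon> * real n}
      \<le> expectation (\<lambda>w. \<Sum>i=1..n. \<bar>X i w - truncation n (X i w)\<bar>) / (\<epsilon> * real n)"
    using \<open>n \<ge> 1\<close> \<open>\<epsilon> > 0\<close>
    by (intro integral_Markov_inequality_measure[OF _ sets.top]) (auto intro!: sum_nonneg)
  then show ?thesis
    using expectation_truncation_sums(1)[OF int, of n] \<open>n \<ge> 1\<close> by simp
qed

text \<open>Truncating at level \<open>n\<close> splits the deviation of the partial sum into a part controlled in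
  mean (Markov) and a bounded part controlled by the variance condition (Chebyshev).\<close>

lemma prob_partial_sum_deviation_le:
  assumes int: "integrable M (X 1)" and "n \<ge> 1" and "\<epsilon> > 0"
    and small: "expectation (\<lambda>w. \<bar>X 1 w - truncation n (X 1 w)\<bar>) < \<epsilon>"
  shows "prob {w\<in>space M. \<bar>(\<Sum>i=1..n. X i w) - real n * expectation (X 1)\<bar> > 3 * \<epsilon> * real n}
    \<le> expectation (\<lambda>w. \<bar>X 1 w - truncation n (X 1 w)\<bar>) / \<epsilon>
      + C * expectation (\<lambda>w. (truncation n (X 1 w))\<^sup>2 / real n) / \<epsilon>\<^sup>2"
proof -
  define T where "T = (\<lambda>w. \<Sum>i=1..n. truncation n (X i w))"
  define D where "D = (\<lambda>w. \<Sum>i=1..n. \<bar>X i w - truncation n (X i w)\<bar>)"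
  define t where "t = \<epsilon> * real n"
  have [measurable]: "T \<in> borel_measurable M" "D \<in> borel_measurable M"
    unfolding T_def D_def by measurable
  have "{w\<in>space M. \<bar>(\<Sum>i=1..n. X i w) - real n * expectation (X 1)\<bar> > 3 * t}
      \<subseteq> {w\<in>space M. D w \<ge> t} \<union> {w\<in>space M. \<bar>T w - expectation T\<bar> \<ge> t}"
  proof (rule subsetI)
    fix w assume w: "w \<in> {w\<in>space M. \<bar>(\<Sum>i=1..n. X i w) - real n * expectation (X 1)\<bar> > 3 * t}"
    have "\<bar>(\<Sum>i=1..n. X i w) - T w\<bar> \<le> D w"
      unfolding T_def D_def by (metis (no_types) sum_abs sum_subtractf)
    moreover have "\<bar>expectation T - real n * expectation (X 1)\<bar> < t"
    proof -
      have "real n * expectation (\<lambda>w. \<bar>X 1 w - truncation n (X 1 w)\<bar>) < t"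
        unfolding t_def using small \<open>n \<ge> 1\<close> by simp
      then show ?thesis
        using expectation_truncation_sums(2)[OF int, of n] unfolding T_def by linarith
    qed

    moreover have "3 * t < \<bar>(\<Sum>i=1..n. X i w) - real n * expectation (X 1)\<bar>" using w by simp
    ultimately have "D w \<ge> t \<or> \<bar>T w - expectation T\<bar> \<ge> t" by linarith

    then show "w \<in> {w\<in>space M. D w \<ge> t} \<union> {w\<in>space M. \<bar>T w - expectation T\<bar> \<ge> t}"
      using w by auto
  qed
  then have "prob {w\<in>space M. \<bar>(\<Sum>i=1..n. X i w) - real n * expectation (X 1)\<bar> > 3 * t}
      \<le> prob ({w\<in>space M. D w \<ge> t} \<union> {w\<in>space M. \<bar>T w - expectation T\<bar> \<ge> t})"
    by (rule finite_measure_mono) measurable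
  also have "\<dots> \<le> prob {w\<in>space M. D w \<ge> t} + prob {w\<in>space M. \<bar>T w - expectation T\<bar> \<ge> t}"
    by (rule measure_Un_le; measurable)
  finally show ?thesis
    using prob_truncation_error_sum_ge[OF int \<open>n \<ge> 1\<close> \<open>\<epsilon> > 0\<close>]
      prob_truncated_sum_deviation_ge[OF \<open>n \<ge> 1\<close> \<open>\<epsilon> > 0\<close>]
    unfolding T_def D_def t_def by (simp add: mult.assoc)
qed

lemma weak_law:
  assumes int: "integrable M (X 1)" and "\<epsilon> > 0" and "\<delta> > 0"
  shows "eventually (\<lambda>n. prob {w\<in>space M.
      \<bar>(\<Sum>i=1..n. X i w) - real n * expectation (X 1)\<bar> > \<epsilon> * real n} < \<delta>) sequentially"
proof -
  define e where "e = \<epsilon> / 3"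
  have "e > 0" unfolding e_def using \<open>\<epsilon> > 0\<close> by simp
  note a_lim = truncation_error_tendsto_zero[OF int]
  note v_lim = truncated_second_moment_tendsto_zero[OF int]
  have "(\<lambda>n. expectation (\<lambda>w. \<bar>X 1 w - truncation n (X 1 w)\<bar>) / e
      + C * expectation (\<lambda>w. (truncation n (X 1 w))\<^sup>2 / real n) / e\<^sup>2) \<longlonglongrightarrow> 0 / e + C * 0 / e\<^sup>2"
    by (intro tendsto_intros a_lim v_lim) (use \<open>e > 0\<close> in auto)
  then have "eventually (\<lambda>n. expectation (\<lambda>w. \<bar>X 1 w - truncation n (X 1 w)\<bar>) / e
      + C * expectation (\<lambda>w. (truncation n (X 1 w))\<^sup>2 / real n) / e\<^sup>2 < \<delta>) sequentially"
    using \<open>\<delta> > 0\<close> by (intro order_tendstoD(2)) auto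
  moreover have "eventually (\<lambda>n. expectation (\<lambda>w. \<bar>X 1 w - truncation n (X 1 w)\<bar>) < e) sequentially"
    by (rule order_tendstoD(2)[OF a_lim \<open>e > 0\<close>])
  moreover have "eventually (\<lambda>n. n \<ge> (1::nat)) sequentially" by simp
  ultimately show ?thesis
  proof eventually_elim
    case (elim n)
    with prob_partial_sum_deviation_le[OF int elim(3) \<open>e > 0\<close> elim(2)] show ?case
      by (simp add: e_def)
  qed
qed

end


context variance_controlled
begin

context
  fixes c :: real and b :: "nat \<Rightarrow> real"
  assumes maximal_summable: "\<And>\<epsilon>. \<epsilon> > 0 \<Longrightarrow> summable (\<lambda>n. prob {w\<in>space M.
      (MAX j\<in>{1..n}. \<bar>\<Sum>i=1..j. (X i w - c)\<bar>) > \<epsilon> * b n} / real n)"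
    and b_pos: "eventually (\<lambda>n. b n > 0) sequentially"
begin

lemma summable_prob_signed_tail_saturated:
  assumes "s \<in> {-1, 1}" and "\<epsilon> > 0"
  shows "summable (\<lambda>n. prob {w\<in>space M. s * (X 1 w - c) > 2 * \<epsilon> * b n}
    / (C + real n * prob {w\<in>space M. s * (X 1 w - c) > 2 * \<epsilon> * b n}))"
proof (rule summable_comparison_test_ev[OF _ maximal_summable[OF \<open>\<epsilon> > 0\<close>]])
  have "eventually (\<lambda>n. n \<ge> (1::nat)) sequentially" by simp
  then show "eventually (\<lambda>n. norm (prob {w\<in>space M. s * (X 1 w - c) > 2 * \<epsilon> * b n}
      / (C + real n * prob {w\<in>space M. s * (X 1 w - c) > 2 * \<epsilon> * b n}))
    \<le> prob {w\<in>space M. (MAX j\<in>{1..n}. \<bar>\<Sum>i=1..j. (X i w - c)\<bar>) > \<epsilon> * b n} / real n) sequentially"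
    using b_pos
  proof eventually_elim
    case (elim n)
    define T where "T = {x. s * (x - c) > 2 * \<epsilon> * b n}"
    define q where "q = prob {w\<in>space M. X 1 w \<in> T}"
    have [measurable]: "T \<in> sets borel" unfolding T_def by measurable
    have sign: "mono (\<lambda>x. indicator T x :: real) \<or> antimono (\<lambda>x. indicator T x :: real)"
      using \<open>s \<in> {-1, 1}\<close> by (auto simp: T_def mono_def antimono_def indicator_def)
    have "C + real n * q > 0" using C_pos by (simp add: q_def add_pos_nonneg)
    have "real n * q / (C + real n * q) \<le> prob {w\<in>space M. \<exists>j\<in>{1..n}. X j w \<in> T}"
      using prob_exists_hit_ge[OF _ elim(1) sign] by (simp add: q_def)
    also have "\<dots> \<le> prob {w\<in>space M. (MAX j\<in>{1..n}. \<bar>\<Sum>i=1..j. (X i w - c)\<bar>) > \<epsilon> * b n}"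
    proof (rule finite_measure_mono)
      show "{w\<in>space M. \<exists>j\<in>{1..n}. X j w \<in> T}
          \<subseteq> {w\<in>space M. (MAX j\<in>{1..n}. \<bar>\<Sum>i=1..j. (X i w - c)\<bar>) > \<epsilon> * b n}"
      proof (rule Collect_mono, rule impI)
        fix w assume "w \<in> space M \<and> (\<exists>j\<in>{1..n}. X j w \<in> T)"
        then obtain j where j: "w \<in> space M" "j \<in> {1..n}" "s * (X j w - c) > 2 * \<epsilon> * b n"
          by (auto simp: T_def)
        moreover have "\<bar>X j w - c\<bar> \<ge> s * (X j w - c)" using \<open>s \<in> {-1, 1}\<close> by auto
        ultimately have "\<bar>X j w - c\<bar> > 2 * (\<epsilon> * b n)" by simp
        with j(1,2) show "w \<in> space M \<and> (MAX j\<in>{1..n}. \<bar>\<Sum>i=1..j. (X i w - c)\<bar>) > \<epsilon> * b n"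
          using Max_abs_partial_sums_gt[of "\<epsilon> * b n" j n "\<lambda>i. X i w" c] \<open>\<epsilon> > 0\<close> elim(2) by simp
      qed
    qed measurable
    finally show ?case
      using elim(1) \<open>C + real n * q > 0\<close> by (simp add: T_def q_def field_simps)
  qed
qed

lemma summable_prob_signed_tail:
  assumes "s \<in> {-1, 1}" and "\<epsilon> > 0" and "K > 0"
    and quasi_mono: "\<And>m n. N \<le> m \<Longrightarrow> m \<le> n \<Longrightarrow> b m \<le> K * b n"
  shows "summable (\<lambda>n. prob {w\<in>space M. s * (X 1 w - c) > 2 * \<epsilon> * b n})"
proof (rule summable_of_summable_saturated[OF C_pos _
      summable_prob_signed_tail_saturated[OF assms(1,2)]
      summable_prob_signed_tail_saturated[OF assms(1), of "\<epsilon> / K"]])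
  show "prob {w\<in>space M. s * (X 1 w - c) > 2 * \<epsilon> * b n}
      \<le> prob {w\<in>space M. s * (X 1 w - c) > 2 * (\<epsilon> / K) * b m}" if "N \<le> m" "m \<le> n" for m n
  proof (rule finite_measure_mono)
    have "(\<epsilon> / K) * b m \<le> \<epsilon> * b n"
      using quasi_mono[OF that] \<open>\<epsilon> > 0\<close> \<open>K > 0\<close> by (simp add: field_simps)
    then show "{w\<in>space M. s * (X 1 w - c) > 2 * \<epsilon> * b n}
        \<subseteq> {w\<in>space M. s * (X 1 w - c) > 2 * (\<epsilon> / K) * b m}" by auto
  qed measurable
qed (use \<open>\<epsilon> > 0\<close> \<open>K > 0\<close> in auto)

lemma summable_prob_deviation:
  assumes "K > 0" and "\<And>m n. N \<le> m \<Longrightarrow> m \<le> n \<Longrightarrow> b m \<le> K * b n"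
  shows "summable (\<lambda>n. prob {w\<in>space M. \<bar>X 1 w - c\<bar> > b n})"
proof (rule summable_comparison_test_ev)
  show "summable (\<lambda>n. prob {w\<in>space M. 1 * (X 1 w - c) > 2 * (1/2) * b n}
      + prob {w\<in>space M. -1 * (X 1 w - c) > 2 * (1/2) * b n})"
    using assms by (intro summable_add summable_prob_signed_tail) auto
  show "eventually (\<lambda>n. norm (prob {w\<in>space M. \<bar>X 1 w - c\<bar> > b n})
      \<le> prob {w\<in>space M. 1 * (X 1 w - c) > 2 * (1/2) * b n}
        + prob {w\<in>space M. -1 * (X 1 w - c) > 2 * (1/2) * b n}) sequentially"
  proof (rule always_eventually, rule allI)
    fix n
    have "prob {w\<in>space M. \<bar>X 1 w - c\<bar> > b n}
        \<le> prob ({w\<in>space M. 1 * (X 1 w - c) > 2 * (1/2) * b n}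
          \<union> {w\<in>space M. -1 * (X 1 w - c) > 2 * (1/2) * b n})"
    proof (rule finite_measure_mono)
      show "{w\<in>space M. \<bar>X 1 w - c\<bar> > b n} \<subseteq> {w\<in>space M. 1 * (X 1 w - c) > 2 * (1/2) * b n}
          \<union> {w\<in>space M. -1 * (X 1 w - c) > 2 * (1/2) * b n}" by (auto simp: abs_if)
    qed measurable
    also have "\<dots> \<le> prob {w\<in>space M. 1 * (X 1 w - c) > 2 * (1/2) * b n}
        + prob {w\<in>space M. -1 * (X 1 w - c) > 2 * (1/2) * b n}"
      by (rule measure_Un_le; measurable)
    finally show "norm (prob {w\<in>space M. \<bar>X 1 w - c\<bar> > b n})
      \<le> prob {w\<in>space M. 1 * (X 1 w - c) > 2 * (1/2) * b n}
        + prob {w\<in>space M. -1 * (X 1 w - c) > 2 * (1/2) * b n}" by simp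
  qed
qed


lemma integrable_moment_of_maximal_summable:
  fixes L Lt :: "real \<Rightarrow> real"
  assumes sv: "slowly_varying L" and sa: "standing_assumptions L Lt" and "p > 0"
    and cont: "continuous_on {0..} L"
    and R: "(\<lambda>n. b n * \<bar>L (b n)\<bar> / real n powr (1/p)) \<longlonglongrightarrow> 1"
    and b_top: "filterlim b at_top sequentially"
  shows "integrable M (\<lambda>w. (\<bar>X 1 w\<bar> * \<bar>L \<bar>X 1 w\<bar>\<bar>) powr p)"
proof -
  obtain K N where "K > 0" "\<And>m n. N \<le> m \<Longrightarrow> m \<le> n \<Longrightarrow> b m \<le> K * b n"
    using normaliser_quasi_mono[OF sv sa \<open>p > 0\<close> R b_top] by blast
  then have tail: "summable (\<lambda>n. prob {w\<in>space M. \<bar>X 1 w - c\<bar> > b n})"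
    by (rule summable_prob_deviation)
  obtain K' N' where K': "K' > 0"
    "\<And>n x. n \<ge> N' \<Longrightarrow> \<bar>x - c\<bar> \<le> b n \<Longrightarrow> (\<bar>x\<bar> * \<bar>L \<bar>x\<bar>\<bar>) powr p \<le> K' * real n"
    using moment_bound_within_normaliser[OF sv sa \<open>p > 0\<close> cont R b_top] by blast
  have [measurable]: "(\<lambda>x. L \<bar>x\<bar>) \<in> borel_measurable borel"
    using cont
    by (intro borel_measurable_continuous_onI continuous_on_compose2[OF _ continuous_on_rabs]) auto
  have "(\<lambda>x. (\<bar>x\<bar> * \<bar>L \<bar>x\<bar>\<bar>) powr p) \<in> borel_measurable borel" by measurable
  from integrable_of_summable_prob_deviation[OF measurable_X this _ K' tail]
  show ?thesis by simp
qed
end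

lemma abs_expectation_diff_le_of_maximal_summable:
  assumes int: "integrable M (X 1)"
    and maximal: "\<And>\<epsilon>. \<epsilon> > 0 \<Longrightarrow> summable (\<lambda>n. prob {w\<in>space M.
      (MAX j\<in>{1..n}. \<bar>\<Sum>i=1..j. (X i w - c)\<bar>) > \<epsilon> * b n} / real n)"
    and "K > 0" and b_le: "eventually (\<lambda>n. b n \<le> K * real n) sequentially"
    and "\<epsilon> > 0"
  shows "\<bar>expectation (X 1) - c\<bar> \<le> 2 * \<epsilon>"
proof -
  define A where "A n = {w\<in>space M. \<bar>(\<Sum>i=1..n. X i w) - real n * expectation (X 1)\<bar> > \<epsilon> * real n}"
    for n
  define E where "E n = {w\<in>space M. (MAX j\<in>{1..n}. \<bar>\<Sum>i=1..j. (X i w - c)\<bar>) > \<epsilon> / K * b n}" for n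
  have events: "A n \<in> events" "E n \<in> events" for n unfolding A_def E_def by measurable
  have "frequently (\<lambda>n. prob (E n) < 1/2) sequentially"
    using maximal[of "\<epsilon> / K"] \<open>\<epsilon> > 0\<close> \<open>K > 0\<close> unfolding E_def
    by (intro summable_div_real_frequently_lt) auto
  moreover have "eventually (\<lambda>n. prob (A n) < 1/2) sequentially"
    unfolding A_def by (rule weak_law[OF int \<open>\<epsilon> > 0\<close>]) simp
  with b_le eventually_ge_at_top[of 1]
  have "eventually (\<lambda>n. prob (A n) < 1/2 \<and> n \<ge> 1 \<and> b n \<le> K * real n) sequentially"
    by eventually_elim auto
  ultimately have "frequently (\<lambda>n. (prob (A n) < 1/2 \<and> n \<ge> 1 \<and> b n \<le> K * real n)
      \<and> prob (E n) < 1/2) sequentially"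
    by (rule frequently_eventually_conj)
  then obtain n where n: "prob (A n) < 1/2" "n \<ge> 1" "b n \<le> K * real n" "prob (E n) < 1/2"
    by (blast dest: frequently_ex)
  have "prob (A n) + prob (E n) < 1" using n(1,4) by simp
  then obtain w where w: "w \<in> space M" "w \<notin> A n" "w \<notin> E n"
    using exists_outside_events[OF events(1)[of n] events(2)[of n]] by blast

  have "\<bar>(\<Sum>i=1..n. X i w) - real n * c\<bar> \<le> \<epsilon> / K * b n"
    using abs_sum_diff_le_Max_abs_partial_sums[OF n(2), of "\<lambda>i. X i w" c] w(1,3)
    unfolding E_def by auto
  also have "\<dots> \<le> \<epsilon> * real n"
    using n(3) \<open>\<epsilon> > 0\<close> \<open>K > 0\<close> by (simp add: field_simps)
  finally have "\<bar>(\<Sum>i=1..n. X i w) - real n * c\<bar> \<le> \<epsilon> * real n" .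
  moreover have "\<bar>(\<Sum>i=1..n. X i w) - real n * expectation (X 1)\<bar> \<le> \<epsilon> * real n"
    using w(1,2) unfolding A_def by auto
  ultimately have "\<bar>real n * expectation (X 1) - real n * c\<bar> \<le> 2 * (\<epsilon> * real n)" by linarith
  moreover have "\<bar>real n * expectation (X 1) - real n * c\<bar> = real n * \<bar>expectation (X 1) - c\<bar>"
    by (simp only: abs_mult abs_of_nat flip: right_diff_distrib)
  ultimately have "real n * \<bar>expectation (X 1) - c\<bar> \<le> real n * (2 * \<epsilon>)" by (simp add: mult_ac)
  then show ?thesis using n(2) by simp
qed

lemma expectation_eq_of_maximal_summable:
  assumes "integrable M (X 1)"
    and "\<And>\<epsilon>. \<epsilon> > 0 \<Longrightarrow> summable (\<lambda>n. prob {w\<in>space M.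
      (MAX j\<in>{1..n}. \<bar>\<Sum>i=1..j. (X i w - c)\<bar>) > \<epsilon> * b n} / real n)"
    and "K > 0" and "eventually (\<lambda>n. b n \<le> K * real n) sequentially"
  shows "expectation (X 1) = c"
proof -
  have "\<bar>expectation (X 1) - c\<bar> \<le> 0"
  proof (rule field_le_epsilon)
    fix e :: real assume "e > 0"
    then show "\<bar>expectation (X 1) - c\<bar> \<le> 0 + e"
      using abs_expectation_diff_le_of_maximal_summable[OF assms, of "e / 2"] by simp
  qed
  then show ?thesis by simp
qed

end

lemma variance_condition_imp_variance_controlled:
  fixes M :: "'a measure" and X :: "nat \<Rightarrow> 'a \<Rightarrow> real"
  assumes "prob_space M" and "\<And>i. X i \<in> borel_measurable M"
    and "\<And>i. i \<ge> 1 \<Longrightarrow> distr M borel (X i) = distr M borel (X 1)"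
    and "variance_condition M X"
  obtains C where "variance_controlled M X C"
proof -
  interpret prob_space M by fact
  obtain C :: real where C: "\<forall>k l (f :: nat \<Rightarrow> real \<Rightarrow> real). l \<ge> 1 \<longrightarrow> (\<forall>i. mono (f i)) \<longrightarrow>
      (\<forall>i\<in>{k+1..k+l}. integrable M (\<lambda>w. (f i (X i w))\<^sup>2)) \<longrightarrow>
      variance (\<lambda>w. \<Sum>i\<in>{k+1..k+l}. f i (X i w)) \<le> C * (\<Sum>i\<in>{k+1..k+l}. variance (\<lambda>w. f i (X i w)))"
    using \<open>variance_condition M X\<close> unfolding variance_condition_def by blast
  have "id_real_sequence M X"
    using assms(1-3) by (intro id_real_sequence.intro id_real_sequence_axioms.intro) blast+
  moreover have "variance_controlled_axioms M X (max C 1)"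
  proof (rule variance_controlled_axioms.intro)
    show "variance (\<lambda>w. \<Sum>i\<in>{1..n}. f i (X i w)) \<le> max C 1 * (\<Sum>i\<in>{1..n}. variance (\<lambda>w. f i (X i w)))"
      if "n \<ge> 1" "\<forall>i. mono (f i)" "\<forall>i\<in>{1..n}. integrable M (\<lambda>w. (f i (X i w))\<^sup>2)" for n f
    proof -
      have "variance (\<lambda>w. \<Sum>i\<in>{1..n}. f i (X i w)) \<le> C * (\<Sum>i\<in>{1..n}. variance (\<lambda>w. f i (X i w)))"
        using C[rule_format, where k=0 and l=n and f=f] that by simp
      also have "\<dots> \<le> max C 1 * (\<Sum>i\<in>{1..n}. variance (\<lambda>w. f i (X i w)))"
        by (intro mult_right_mono sum_nonneg variance_positive) auto
      finally show ?thesis .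
    qed
  qed simp
  ultimately show ?thesis by (intro that variance_controlled.intro)
qed

theorem proposition2p2:
  fixes M :: "'a measure" and X :: "nat \<Rightarrow> 'a \<Rightarrow> real"
    and L Lt :: "real \<Rightarrow> real" and p c :: real
  assumes "prob_space M"
    and "1 \<le> p" and "p < 2"
    and "\<And>i. X i \<in> borel_measurable M"
    and "\<And>i. i \<ge> 1 \<Longrightarrow> distr M borel (X i) = distr M borel (X 1)"
    and "variance_condition M X"
    and "slowly_varying L"
    and "de_bruijn_conjugate L Lt"
    and "standing_assumptions L Lt"
    and "p = 1 \<Longrightarrow> (\<forall>x\<ge>0. L x \<ge> 1) \<and> mono_on {0..} L"
    and "\<And>\<epsilon>. \<epsilon> > 0 \<Longrightarrow>
           summable (\<lambda>n. measure M {\<omega>\<in>space M.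
              (MAX j\<in>{1..n}. \<bar>\<Sum>i=1..j. (X i \<omega> - c)\<bar>)
                > \<epsilon> * real n powr (1/p) * Lt (real n powr (1/p))} / real n)"
  shows "integrable M (\<lambda>\<omega>. \<bar>X 1 \<omega>\<bar> powr p * \<bar>L \<bar>X 1 \<omega>\<bar>\<bar> powr p)
     \<and> integrable M (X 1) \<and> prob_space.expectation M (X 1) = c"
proof -
  obtain C where "variance_controlled M X C"
    using variance_condition_imp_variance_controlled assms(1,4,5,6) by blast
  then interpret variance_controlled M X C .
  have "p > 0" using assms(2) by simp
  have cont: "continuous_on {0..} L" using assms(9) unfolding standing_assumptions_def by blast
  define b where "b = normaliser p Lt"
  have R: "(\<lambda>n. b n * \<bar>L (b n)\<bar> / real n powr (1/p)) \<longlonglongrightarrow> 1"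
    and b_pos: "eventually (\<lambda>n. b n > 0) sequentially"
    using normaliser_asymp[OF assms(8) \<open>p > 0\<close>] unfolding b_def by auto
  have b_top: "filterlim b at_top sequentially"
    by (rule normaliser_filterlim_at_top[OF cont \<open>p > 0\<close> R b_pos])
  have maximal: "summable (\<lambda>n. prob {w\<in>space M.
      (MAX j\<in>{1..n}. \<bar>\<Sum>i=1..j. (X i w - c)\<bar>) > \<epsilon> * b n} / real n)" if "\<epsilon> > 0" for \<epsilon>
    using assms(11)[OF that] by (simp add: b_def normaliser_def mult.assoc)
  have moment: "integrable M (\<lambda>w. (\<bar>X 1 w\<bar> * \<bar>L \<bar>X 1 w\<bar>\<bar>) powr p)"
    by (rule integrable_moment_of_maximal_summable[OF maximal b_pos assms(7,9) \<open>p > 0\<close> cont R b_top])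
  obtain c0 A where lower: "c0 > 0" "A > 0" "\<And>y. y \<ge> A \<Longrightarrow> L y > 0 \<and> c0 * y powr (1/p) \<le> y * L y"
    using eventually_root_le_mult[OF assms(7,9,2)] assms(10) by blast
  have int: "integrable M (X 1)"
    by (rule integrable_of_integrable_moment[OF _ moment \<open>p > 0\<close> lower]) simp
  have "expectation (X 1) = c"
    using normaliser_le_linear[OF lower \<open>p > 0\<close> R b_top] \<open>c0 > 0\<close>
    by (intro expectation_eq_of_maximal_summable[OF int maximal]) auto
  with moment int show ?thesis by (simp add: powr_mult)
qed

end
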